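(* Let $\epsilon>0$, $\chi>0$, $s\in\mathbb{R}$, and let $(U,V)$ be a traveling pulse profile of $u_t=(\epsilon u_x-\chi u\phi(v_x))_x$, $\epsilon v_t=v_{xx}+u-g(v)$ with speed $s$, such that the entries of $D,M,N$ below are bounded continuous on $\mathbb{R}$. Let $\mathcal{L}_0=D(\xi)\partial_{\xi\xi}$ and $\mathcal{L}_1=M(\xi)\partial_\xi+N(\xi)I$ on $X=BUC(\mathbb{R};\mathbb{R}^2)$. Then for $\lambda\in\mathbb{C}$ with $\operatorname{Re}\lambda>0$ sufficiently large, $\|\mathcal{L}_1(\mathcal{L}_0-\lambda I)^{-1}\|<1$.
   Context: $D=\begin{pmatrix}\epsilon & -\chi U\phi'(V')\\ 0 & 1/\epsilon\end{pmatrix}$, $M=\begin{pmatrix}s-\chi\phi(V') & -\chi(U\phi'(V'))'\\ 0 & s\end{pmatrix}$, $N=\begin{pmatrix}-\chi(\phi(V'))' & 0\\ 1/\epsilon & -g'(V)/\epsilon\end{pmatrix}$; $BUC$ is the space of bounded uniformly continuous functions with sup norm (complexified), and $\mathcal{L}_0$ has domain $BUC^2$. *)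

theory Defs
  imports "HOL-Analysis.Analysis"
begin

text \<open>Functions R -> C^2 are modelled as real => complex * complex
  (norm on C^2 = Euclidean norm of the product type).\<close>

definition buc :: "(real \<Rightarrow> complex \<times> complex) \<Rightarrow> bool" where
  "buc f \<longleftrightarrow> bounded (range f) \<and> uniformly_continuous_on UNIV f"

definition buc2 :: "(real \<Rightarrow> complex \<times> complex) \<Rightarrow> bool" where
  "buc2 u \<longleftrightarrow> (\<exists>u1 u2. (\<forall>x. (u has_vector_derivative u1 x) (at x)) \<and>
      (\<forall>x. (u1 has_vector_derivative u2 x) (at x)) \<and> buc u \<and> buc u1 \<and> buc u2)"

definition supn :: "(real \<Rightarrow> complex \<times> complex) \<Rightarrow> real" where
  "supn f = (SUP x. norm (f x))"

definition mat_app :: "real \<Rightarrow> real \<Rightarrow> real \<Rightarrow> real \<Rightarrow> complex \<times> complex \<Rightarrow> complex \<times> complex" where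
  "mat_app a b c d w = (of_real a * fst w + of_real b * snd w, of_real c * fst w + of_real d * snd w)"

text \<open>Traveling pulse profile (U,V) with speed s of
  u_t = (eps u_x - chi u phi(v_x))_x, eps v_t = v_xx + u - g(v), i.e. with u = U(x - s t), v = V(x - s t):
  -s U' = (eps U' - chi U phi(V'))',  -eps s V' = V'' + U - g(V),
  and U, V converge to the same limits at both ends (homoclinic/pulse).\<close>
definition traveling_pulse ::
  "real \<Rightarrow> real \<Rightarrow> (real \<Rightarrow> real) \<Rightarrow> (real \<Rightarrow> real) \<Rightarrow> real \<Rightarrow> (real \<Rightarrow> real) \<Rightarrow> (real \<Rightarrow> real) \<Rightarrow> bool" where
  "traveling_pulse eps chi phi g s U V \<longleftrightarrow>
     (\<forall>x. U differentiable at x) \<and> (\<forall>x. V differentiable at x) \<and>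
     (\<forall>x. deriv V differentiable at x) \<and>
     (\<forall>x. (\<lambda>y. eps * deriv U y - chi * U y * phi (deriv V y)) differentiable at x) \<and>
     (\<forall>x. - s * deriv U x = deriv (\<lambda>y. eps * deriv U y - chi * U y * phi (deriv V y)) x) \<and>
     (\<forall>x. - eps * s * deriv V x = deriv (deriv V) x + U x - g (V x)) \<and>
     (\<exists>Us Vs. (U \<longlongrightarrow> Us) at_top \<and> (U \<longlongrightarrow> Us) at_bot \<and>
              (V \<longlongrightarrow> Vs) at_top \<and> (V \<longlongrightarrow> Vs) at_bot)"

definition cscale :: "complex \<Rightarrow> complex \<times> complex \<Rightarrow> complex \<times> complex" where
  "cscale c w = (c * fst w, c * snd w)"

definition D11 :: "real \<Rightarrow> real" where "D11 eps = eps"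
definition D12 :: "real \<Rightarrow> (real \<Rightarrow> real) \<Rightarrow> (real \<Rightarrow> real) \<Rightarrow> (real \<Rightarrow> real) \<Rightarrow> real \<Rightarrow> real" where
  "D12 chi phi U V x = - chi * U x * deriv phi (deriv V x)"
definition D22 :: "real \<Rightarrow> real" where "D22 eps = 1 / eps"

definition M11 :: "real \<Rightarrow> (real \<Rightarrow> real) \<Rightarrow> real \<Rightarrow> (real \<Rightarrow> real) \<Rightarrow> real \<Rightarrow> real" where
  "M11 chi phi s V x = s - chi * phi (deriv V x)"
definition M12 :: "real \<Rightarrow> (real \<Rightarrow> real) \<Rightarrow> (real \<Rightarrow> real) \<Rightarrow> (real \<Rightarrow> real) \<Rightarrow> real \<Rightarrow> real" where
  "M12 chi phi U V x = - chi * deriv (\<lambda>y. U y * deriv phi (deriv V y)) x"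

definition N11 :: "real \<Rightarrow> (real \<Rightarrow> real) \<Rightarrow> (real \<Rightarrow> real) \<Rightarrow> real \<Rightarrow> real" where
  "N11 chi phi V x = - chi * deriv (\<lambda>y. phi (deriv V y)) x"
definition N22 :: "real \<Rightarrow> (real \<Rightarrow> real) \<Rightarrow> (real \<Rightarrow> real) \<Rightarrow> real \<Rightarrow> real" where
  "N22 eps g V x = - deriv g (V x) / eps"

definition bdd_cont :: "(real \<Rightarrow> real) \<Rightarrow> bool" where
  "bdd_cont h \<longleftrightarrow> bounded (range h) \<and> continuous_on UNIV h"

definition L0 :: "real \<Rightarrow> real \<Rightarrow> (real \<Rightarrow> real) \<Rightarrow> (real \<Rightarrow> real) \<Rightarrow> (real \<Rightarrow> real)
   \<Rightarrow> (real \<Rightarrow> complex \<times> complex) \<Rightarrow> real \<Rightarrow> complex \<times> complex" where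
  "L0 eps chi phi U V u x = mat_app (D11 eps) (D12 chi phi U V x) 0 (D22 eps)
      (vector_derivative (\<lambda>y. vector_derivative u (at y)) (at x))"

definition L1 :: "real \<Rightarrow> real \<Rightarrow> (real \<Rightarrow> real) \<Rightarrow> (real \<Rightarrow> real) \<Rightarrow> real \<Rightarrow> (real \<Rightarrow> real) \<Rightarrow> (real \<Rightarrow> real)
   \<Rightarrow> (real \<Rightarrow> complex \<times> complex) \<Rightarrow> real \<Rightarrow> complex \<times> complex" where
  "L1 eps chi phi g s U V u x =
     mat_app (M11 chi phi s V x) (M12 chi phi U V x) 0 s (vector_derivative u (at x))
   + mat_app (N11 chi phi V x) 0 (1 / eps) (N22 eps g V x) (u x)"

end

theory Submission
  imports Defs
begin

(* The diagonal of D is constant, so D u'' - lam u = f is triangular: its second row is the scalar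
   equation u2''/eps - lam u2 = f2, after which the first row is the scalar equation
   eps u1'' - lam u1 = f1 - D12 u2''. A scalar equation a w'' - lam w = h with Re lam > 0 factors as
   (d/dx + k) (d/dx - k) w = h / a with k = csqrt (lam / a), Re k > 0, and both first-order factors are
   inverted on bounded functions by exponential integrals. This gives |w| <= |h| / Re lam,
   |w'| <= 3 |h| / sqrt (a Re lam), |w''| <= 3 |h| / a and uniqueness of bounded solutions. Hence for
   Re lam >= 1 the resolvent of L0 maps BUC into BUC^2 with |u| + |u'| <= C |f| / sqrt (Re lam), and
   as L1 is first order with bounded coefficients, |L1 u| <= K C |f| / sqrt (Re lam) <= |f| / 2 once
   Re lam is large. *)

section \<open>Uniform continuity on the real line\<close>

lemma uniformly_continuous_on_bounded_derivative:
  fixes f :: "real \<Rightarrow> 'a::real_normed_vector"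
  assumes "\<And>x. (f has_vector_derivative f' x) (at x)" and "\<And>x. norm (f' x) \<le> B"
  shows "uniformly_continuous_on UNIV f"
proof -
  have "0 \<le> B" using assms(2)[of 0] norm_ge_zero order_trans by blast
  have "B-lipschitz_on UNIV f"
  proof (rule bounded_derivative_imp_lipschitz)
    show "(f has_derivative (\<lambda>h. h *\<^sub>R f' x)) (at x within UNIV)" for x
      using assms(1) by (simp add: has_vector_derivative_def)
    show "onorm (\<lambda>h. h *\<^sub>R f' x) \<le> B" for x
      using assms(2) by (simp add: onorm_scaleR_left bounded_linear_ident onorm_id)
  qed (use \<open>0 \<le> B\<close> in auto)
  then show ?thesis by (rule lipschitz_on_uniformly_continuous)
qed

lemma uniformly_continuous_on_mult_bounded:
  fixes f g :: "real \<Rightarrow> 'a::real_normed_algebra"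
  assumes "uniformly_continuous_on UNIV f" "uniformly_continuous_on UNIV g"
    and "\<And>x. norm (f x) \<le> Bf" "\<And>x. norm (g x) \<le> Bg"
  shows "uniformly_continuous_on UNIV (\<lambda>x. f x * g x)"
  unfolding uniformly_continuous_on_sequentially
proof (intro allI impI)
  fix x y :: "nat \<Rightarrow> real"
  assume "(\<forall>n. x n \<in> UNIV) \<and> (\<forall>n. y n \<in> UNIV) \<and> (\<lambda>n. dist (x n) (y n)) \<longlonglongrightarrow> 0"
  then have "(\<lambda>n. dist (f (x n)) (f (y n))) \<longlonglongrightarrow> 0" "(\<lambda>n. dist (g (x n)) (g (y n))) \<longlonglongrightarrow> 0"
    using assms(1,2) unfolding uniformly_continuous_on_sequentially by auto
  then have lim: "(\<lambda>n. Bf * dist (g (x n)) (g (y n)) + dist (f (x n)) (f (y n)) * Bg) \<longlonglongrightarrow> 0"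
    by (auto intro: tendsto_add_zero tendsto_mult_right_zero tendsto_mult_left_zero)
  have "norm (dist (f (x n) * g (x n)) (f (y n) * g (y n)))
      \<le> Bf * dist (g (x n)) (g (y n)) + dist (f (x n)) (f (y n)) * Bg" for n
  proof -
    have "f (x n) * g (x n) - f (y n) * g (y n) = f (x n) * (g (x n) - g (y n)) + (f (x n) - f (y n)) * g (y n)"
      by (simp add: algebra_simps)
    then have "dist (f (x n) * g (x n)) (f (y n) * g (y n))
        \<le> norm (f (x n)) * dist (g (x n)) (g (y n)) + dist (f (x n)) (f (y n)) * norm (g (y n))"
      by (metis dist_norm norm_mult_ineq norm_triangle_le add_mono)
    also have "\<dots> \<le> Bf * dist (g (x n)) (g (y n)) + dist (f (x n)) (f (y n)) * Bg"
      using assms(3,4) by (intro add_mono mult_right_mono mult_left_mono) auto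
    finally show ?thesis by simp
  qed
  then show "(\<lambda>n. dist (f (x n) * g (x n)) (f (y n) * g (y n))) \<longlonglongrightarrow> 0"
    by (rule Lim_null_comparison[OF always_eventually lim, rule_format])
qed

lemma uniformly_continuous_on_Pair:
  fixes f :: "real \<Rightarrow> 'a::real_normed_vector" and g :: "real \<Rightarrow> 'b::real_normed_vector"
  assumes "uniformly_continuous_on UNIV f" "uniformly_continuous_on UNIV g"
  shows "uniformly_continuous_on UNIV (\<lambda>x. (f x, g x))"
proof -
  have "uniformly_continuous_on UNIV (\<lambda>x. (f x, 0) + (0, g x))"
    by (intro uniformly_continuous_on_add bounded_linear.uniformly_continuous_on[OF _ assms(1)]
        bounded_linear.uniformly_continuous_on[OF _ assms(2)] bounded_linear_Pair
        bounded_linear_ident bounded_linear_zero)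
  then show ?thesis by simp
qed

lemma uniformly_continuous_on_diff_of_real_mult:
  fixes d :: "real \<Rightarrow> real" and h w :: "real \<Rightarrow> complex"
  assumes "uniformly_continuous_on UNIV h"
    and "uniformly_continuous_on UNIV d" and "\<And>x. \<bar>d x\<bar> \<le> KD"
    and "uniformly_continuous_on UNIV w" and "\<And>x. norm (w x) \<le> W"
  shows "uniformly_continuous_on UNIV (\<lambda>x. h x - of_real (d x) * w x)"
proof (intro uniformly_continuous_on_diff assms(1) uniformly_continuous_on_mult_bounded)
  show "uniformly_continuous_on UNIV (\<lambda>x. of_real (d x) :: complex)"
    by (rule bounded_linear.uniformly_continuous_on[OF bounded_linear_of_real assms(2)])
  show "norm (of_real (d x) :: complex) \<le> KD" for x
    using assms(3) by simp
qed (fact assms(4,5))+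

section \<open>Bounded solutions of linear equations with constant coefficients\<close>

lemma has_vector_derivative_cexp_of_real:
  fixes k :: complex
  shows "((\<lambda>x::real. exp (k * of_real x)) has_vector_derivative (k * exp (k * of_real x))) (at x)"
proof -
  have "((\<lambda>z. exp (k * z)) has_field_derivative (exp (k * of_real x) * k)) (at (of_real x))"
    by (auto intro!: derivative_eq_intros)
  from has_vector_derivative_real_field[OF this] show ?thesis
    by (simp add: mult.commute)
qed

lemma has_vector_derivative_reflect:
  fixes v :: "real \<Rightarrow> 'a::real_normed_vector"
  assumes "(v has_vector_derivative v') (at (- x))"
  shows "((\<lambda>x. v (- x)) has_vector_derivative - v') (at x)"
proof -
  have "(uminus has_vector_derivative (-1)) (at x)"
    using has_vector_derivative_minus[OF has_vector_derivative_id[of "at x"]] by (simp add: fun_Compl_def)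
  from vector_diff_chain_at[OF this] assms show ?thesis
    by (simp add: o_def)
qed

lemma has_vector_derivative_integral_atLeast:
  fixes F :: "real \<Rightarrow> 'a::banach"
  assumes "continuous_on UNIV F" and "\<And>c. F integrable_on {c..}"
  shows "((\<lambda>y. integral {y..} F) has_vector_derivative - F x) (at x)"
proof -
  define c where "c = x - 1"
  have split: "integral {y..} F = integral {c..} F - integral {c..y} F" if "c < y" for y
  proof -
    have "(F has_integral (integral {c..y} F + integral {y..} F)) ({c..y} \<union> {y..})"
    proof (rule has_integral_Un)
      show "(F has_integral integral {c..y} F) {c..y}"
        using integrable_continuous_real[OF continuous_on_subset[OF assms(1)]] by blast
      show "(F has_integral integral {y..} F) {y..}"
        using assms(2) by blast
      have "{c..y} \<inter> {y..} = {y}" using that by auto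
      then show "negligible ({c..y} \<inter> {y..})" by simp
    qed
    moreover have "{c..y} \<union> {y..} = {c..}" using that by auto
    ultimately show ?thesis by (metis add_diff_cancel_left' integral_unique)
  qed
  have "((\<lambda>y. integral {c..y} F) has_vector_derivative F x) (at x within {c..x+1})"
    by (rule integral_has_vector_derivative[OF continuous_on_subset[OF assms(1)]]) (auto simp: c_def)
  moreover have "at x within {c..x+1} = at x"
    by (rule at_within_interior) (auto simp: c_def)
  ultimately have "((\<lambda>y. integral {c..} F - integral {c..y} F) has_vector_derivative - F x) (at x)"
    using has_vector_derivative_diff[OF has_vector_derivative_const] by fastforce
  then show ?thesis
    by (rule has_vector_derivative_transform_within_open[where S="{c<..}"]) (auto simp: c_def split)
qed

lemma integrable_on_cexp_mult_bounded:
  fixes g :: "real \<Rightarrow> complex"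
  assumes "0 < Re k" and "continuous_on UNIV g" and "\<And>x. norm (g x) \<le> B"
  shows "(\<lambda>y. exp (- (k * of_real y)) * g y) integrable_on {c..}"
proof (rule measurable_bounded_by_integrable_imp_integrable)
  show "(\<lambda>y. exp (- (k * of_real y)) * g y) \<in> borel_measurable (lebesgue_on {c..})"
    by (rule continuous_imp_measurable_on_sets_lebesgue)
      (auto intro!: continuous_intros continuous_on_subset[OF assms(2)])
  show "(\<lambda>y. B * exp (- Re k * y)) integrable_on {c..}"
    using has_integral_mult_right[OF has_integral_exp_minus_to_infinity[OF assms(1), of c], of B]
    by (auto simp: integrable_on_def)
  show "norm (exp (- (k * of_real y)) * g y) \<le> B * exp (- Re k * y)" for y
    using assms(3)[of y] by (simp add: norm_mult mult.commute mult_left_mono)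
qed auto

lemma linear_ode_bounded_solution:
  fixes g :: "real \<Rightarrow> complex"
  assumes k: "0 < Re k" and g: "continuous_on UNIV g" and B: "\<And>x. norm (g x) \<le> B"
  obtains w where "\<And>x. (w has_vector_derivative (k * w x + g x)) (at x)" and "\<And>x. norm (w x) \<le> B / Re k"
proof -
  define F where "F = (\<lambda>y. exp (- (k * of_real y)) * g y)"
  have F_int: "F integrable_on {c..}" for c
    unfolding F_def by (rule integrable_on_cexp_mult_bounded[OF k g B])
  have F_cont: "continuous_on UNIV F"
    unfolding F_def by (auto intro!: continuous_intros g)
  define w where "w = (\<lambda>x. - (exp (k * of_real x) * integral {x..} F))"
  have "(w has_vector_derivative (k * w x + g x)) (at x)" for x
  proof -
    have "(w has_vector_derivative - (exp (k * of_real x) * - F x + k * exp (k * of_real x) * integral {x..} F)) (at x)"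
      unfolding w_def
      by (intro has_vector_derivative_minus has_vector_derivative_mult has_vector_derivative_cexp_of_real
          has_vector_derivative_integral_atLeast F_cont F_int)
    then show ?thesis
      by (simp add: w_def F_def algebra_simps exp_minus_inverse)
  qed
  moreover have "norm (w x) \<le> B / Re k" for x
  proof -
    have exp_int: "((\<lambda>y. B * exp (- Re k * y)) has_integral B * (exp (- Re k * x) / Re k)) {x..}"
      using has_integral_mult_right[OF has_integral_exp_minus_to_infinity[OF k, of x], of B] by simp
    have "norm (integral {x..} F) \<le> integral {x..} (\<lambda>y. B * exp (- Re k * y))"
    proof (rule integral_norm_bound_integral[OF F_int])
      show "(\<lambda>y. B * exp (- Re k * y)) integrable_on {x..}"
        using exp_int by blast
      show "norm (F y) \<le> B * exp (- Re k * y)" for y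
        using B[of y] by (simp add: F_def norm_mult mult.commute mult_left_mono)
    qed
    also have "\<dots> = B * (exp (- Re k * x) / Re k)"
      using exp_int by (rule integral_unique)
    finally have F_bound: "norm (integral {x..} F) \<le> B * (exp (- Re k * x) / Re k)" .
    have "norm (w x) = exp (Re k * x) * norm (integral {x..} F)"
      by (simp add: w_def norm_mult)
    also have "\<dots> \<le> exp (Re k * x) * (B * (exp (- Re k * x) / Re k))"
      by (rule mult_left_mono[OF F_bound]) simp
    also have "\<dots> = B / Re k"
      by (simp add: exp_minus_inverse)
    finally show ?thesis .
  qed
  ultimately show ?thesis using that by blast
qed

lemma linear_ode_bounded_solution_backward:
  fixes g :: "real \<Rightarrow> complex"
  assumes k: "0 < Re k" and g: "continuous_on UNIV g" and B: "\<And>x. norm (g x) \<le> B"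
  obtains u where "\<And>x. (u has_vector_derivative (g x - k * u x)) (at x)" and "\<And>x. norm (u x) \<le> B / Re k"
proof -
  have "continuous_on UNIV (\<lambda>y. - g (- y))"
    by (auto intro!: continuous_intros continuous_on_compose2[OF g])
  then obtain v where v: "\<And>x. (v has_vector_derivative (k * v x - g (- x))) (at x)" "\<And>x. norm (v x) \<le> B / Re k"
    using linear_ode_bounded_solution[OF k, of "\<lambda>y. - g (- y)" B] B by auto
  show ?thesis
  proof
    show "((\<lambda>x. v (- x)) has_vector_derivative (g x - k * v (- x))) (at x)" for x
      using has_vector_derivative_reflect[OF v(1)[of "- x"]] by simp
    show "norm (v (- x)) \<le> B / Re k" for x
      by (rule v(2))
  qed
qed

(* A solution of u' = - k u is c exp (- k x), which is unbounded at -oo unless c = 0. *)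

lemma linear_ode_bounded_solution_unique:
  fixes u :: "real \<Rightarrow> complex"
  assumes k: "0 < Re k" and u: "\<And>x. (u has_vector_derivative (- k * u x)) (at x)"
    and B: "\<And>x. norm (u x) \<le> B"
  shows "u x = 0"
proof -
  have "((\<lambda>x. exp (k * of_real x) * u x) has_vector_derivative 0) (at x)" for x
    using has_vector_derivative_mult[OF has_vector_derivative_cexp_of_real[of k] u]
    by (simp add: algebra_simps)
  then obtain c where c: "\<And>x. exp (k * of_real x) * u x = c"
    using has_vector_derivative_zero_constant[of UNIV "\<lambda>x. exp (k * of_real x) * u x"] by auto
  have u_eq: "u x = exp (- (k * of_real x)) * c" for x
    using c[of x] by (metis exp_minus_inverse mult.assoc mult_1 mult.commute)
  have "c = 0"
  proof (rule ccontr)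
    assume "c \<noteq> 0"
    define t where "t = (B + 1) / (Re k * norm c)"
    have "0 \<le> B" using B[of 0] norm_ge_zero order_trans by blast
    then have "0 \<le> t" using k by (simp add: t_def)
    have "(1 + Re k * t) * norm c \<le> exp (Re k * t) * norm c"
      using exp_ge_add_one_self[of "Re k * t"] by (intro mult_right_mono) auto
    also have "\<dots> = norm (u (- t))"
      by (simp add: u_eq norm_mult)
    also have "\<dots> \<le> B" by (rule B)
    moreover have "(1 + Re k * t) * norm c = norm c + (B + 1)"
      using \<open>c \<noteq> 0\<close> k by (simp add: t_def field_simps)
    ultimately show False using norm_ge_zero[of c] by linarith
  qed
  then show ?thesis using u_eq by simp
qed

lemma csqrt_Re_pos:
  assumes "0 < Re mu"
  shows "0 < Re (csqrt mu)" and "Re mu \<le> (Re (csqrt mu))\<^sup>2"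
    and "norm (csqrt mu) \<le> 2 * Re (csqrt mu)" and "norm mu \<le> 2 * (Re (csqrt mu))\<^sup>2"
proof -
  define a b where "a = Re (csqrt mu)" and "b = Im (csqrt mu)"
  have "mu = (csqrt mu)\<^sup>2" by simp
  then have Re_mu: "Re mu = a\<^sup>2 - b\<^sup>2" and norm_mu: "norm mu = a\<^sup>2 + b\<^sup>2"
    by (metis Re_power2 a_def b_def, metis cmod_power2 norm_power a_def b_def)
  have "0 \<le> a" unfolding a_def by (rule Re_csqrt)
  moreover have "b\<^sup>2 < a\<^sup>2" using Re_mu assms by simp
  ultimately have "0 < a" using zero_le_power2[of b] by (cases "a = 0") auto
  then show "0 < Re (csqrt mu)" by (simp only: a_def)
  show "Re mu \<le> (Re (csqrt mu))\<^sup>2" unfolding a_def[symmetric] using Re_mu by simp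
  have "norm mu \<le> 2 * a\<^sup>2" using Re_mu norm_mu assms by simp
  then show "norm mu \<le> 2 * (Re (csqrt mu))\<^sup>2" by (simp only: a_def)
  have "(norm (csqrt mu))\<^sup>2 = norm mu"
    by (simp add: norm_power[symmetric])
  also have "\<dots> \<le> 2 * a\<^sup>2" by fact
  also have "\<dots> \<le> (2 * a)\<^sup>2"
    by (simp add: power_mult_distrib)
  finally have "(norm (csqrt mu))\<^sup>2 \<le> (2 * a)\<^sup>2" .
  from power2_le_imp_le[OF this] \<open>0 < a\<close> have "norm (csqrt mu) \<le> 2 * a"
    by simp
  then show "norm (csqrt mu) \<le> 2 * Re (csqrt mu)" by (simp only: a_def)
qed

(* With k^2 = mu, the function x |-> u' (- x) + k u (- x) solves w' = - k w. *)

lemma second_order_ode_bounded_solution_unique: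
  fixes u u1 :: "real \<Rightarrow> complex"
  assumes mu: "0 < Re mu"
    and u: "\<And>x. (u has_vector_derivative u1 x) (at x)"
    and u1: "\<And>x. (u1 has_vector_derivative (mu * u x)) (at x)"
    and B: "\<And>x. norm (u x) \<le> B" and B1: "\<And>x. norm (u1 x) \<le> B1"
  shows "u x = 0"
proof -
  define k where "k = csqrt mu"
  have kk: "k * k = mu" by (simp add: k_def power2_eq_square[symmetric])
  have k: "0 < Re k" unfolding k_def by (rule csqrt_Re_pos(1)[OF mu])
  define w where "w = (\<lambda>x. - (u1 (- x) + k * u (- x)))"
  have "(w has_vector_derivative (- k * w x)) (at x)" for x
  proof -
    have "((\<lambda>x. u1 x + k * u x) has_vector_derivative (mu * u (- x) + k * u1 (- x))) (at (- x))"
      by (intro has_vector_derivative_add has_vector_derivative_mult_right u u1)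
    from has_vector_derivative_minus[OF has_vector_derivative_reflect[OF this]]
    show ?thesis by (simp add: w_def kk[symmetric] algebra_simps)
  qed
  moreover have "norm (w x) \<le> B1 + norm k * B" for x
    unfolding w_def norm_minus_cancel
    by (rule order_trans[OF norm_triangle_ineq])
      (auto simp: norm_mult intro!: add_mono B1 mult_left_mono B)
  ultimately have w_zero: "w x = 0" for x
    using linear_ode_bounded_solution_unique[OF k] by blast
  have "- u1 x = k * u x" for x
    using w_zero[of "- x"] by (simp add: w_def)
  then have "u1 x = - k * u x" for x
    by (metis minus_minus mult_minus_left)
  then have "(u has_vector_derivative (- k * u x)) (at x)" for x
    using u by metis
  then show ?thesis
    by (rule linear_ode_bounded_solution_unique[OF k _ B])
qed

(* Factor d^2/dx^2 - mu = (d/dx + k) (d/dx - k) with k = csqrt mu: solve w' = k w + h forwards and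
   u' = w - k u backwards. *)

lemma second_order_ode_bounded_solution:
  fixes h :: "real \<Rightarrow> complex"
  assumes mu: "0 < Re mu" and h: "continuous_on UNIV h" and B: "\<And>x. norm (h x) \<le> B"
  obtains u u1 where "\<And>x. (u has_vector_derivative u1 x) (at x)"
    and "\<And>x. (u1 has_vector_derivative (mu * u x + h x)) (at x)"
    and "\<And>x. norm (u x) \<le> B / Re mu" and "\<And>x. norm (u1 x) \<le> 3 * B / sqrt (Re mu)"
    and "\<And>x. norm (mu * u x + h x) \<le> 3 * B"
proof -
  define k where "k = csqrt mu"
  define a where "a = Re k"
  have kk: "k * k = mu" by (simp add: k_def power2_eq_square[symmetric])
  have a: "0 < a" and mu_le: "Re mu \<le> a\<^sup>2" and norm_k: "norm k \<le> 2 * a" and norm_mu: "norm mu \<le> 2 * a\<^sup>2"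
    using csqrt_Re_pos[OF mu] by (simp_all add: a_def k_def)
  have "0 \<le> B" using B[of 0] norm_ge_zero order_trans by blast
  obtain w where w: "\<And>x. (w has_vector_derivative (k * w x + h x)) (at x)" and w_bound: "\<And>x. norm (w x) \<le> B / a"
    using linear_ode_bounded_solution[of k h B] a h B by (auto simp: a_def)
  have "continuous_on UNIV w"
    using w by (intro continuous_on_vector_derivative) auto
  then obtain u where u: "\<And>x. (u has_vector_derivative (w x - k * u x)) (at x)"
    and u_bound: "\<And>x. norm (u x) \<le> B / a / a"
    using linear_ode_bounded_solution_backward[of k w "B / a"] a w_bound by (auto simp: a_def)
  define u1 where "u1 = (\<lambda>x. w x - k * u x)"
  show ?thesis
  proof
    show "(u has_vector_derivative u1 x) (at x)" for x
      using u by (simp add: u1_def)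
    show "(u1 has_vector_derivative (mu * u x + h x)) (at x)" for x
      using has_vector_derivative_diff[OF w has_vector_derivative_mult_right[OF u, where a=k]]
      by (simp add: u1_def kk[symmetric] algebra_simps)
    have "B / a / a \<le> B / Re mu"
      using mu mu_le \<open>0 \<le> B\<close> by (simp add: divide_divide_eq_left power2_eq_square divide_left_mono)
    then show "norm (u x) \<le> B / Re mu" for x
      using u_bound[of x] by linarith
    have "sqrt (Re mu) \<le> a"
      using mu_le a real_le_lsqrt by simp
    have "norm (u1 x) \<le> norm (w x) + norm k * norm (u x)" for x
      unfolding u1_def by (metis norm_triangle_ineq4 norm_mult)
    also have "\<dots> x \<le> B / a + 2 * a * (B / a / a)" for x
      using w_bound[of x] u_bound[of x] norm_k a by (intro add_mono mult_mono) auto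
    also have "\<dots> = 3 * B / a"
      using a by (simp add: field_simps)
    also have "\<dots> \<le> 3 * B / sqrt (Re mu)"
      using \<open>0 \<le> B\<close> mu a \<open>sqrt (Re mu) \<le> a\<close> by (intro divide_left_mono) auto
    finally show "norm (u1 x) \<le> 3 * B / sqrt (Re mu)" for x .
    have "norm (mu * u x + h x) \<le> norm mu * norm (u x) + norm (h x)" for x
      by (metis norm_triangle_ineq norm_mult)
    also have "\<dots> x \<le> 2 * a\<^sup>2 * (B / a / a) + B" for x
      using norm_mu u_bound[of x] B[of x] a by (intro add_mono mult_mono) auto
    also have "\<dots> = 3 * B"
      using a by (simp add: power2_eq_square)
    finally show "norm (mu * u x + h x) \<le> 3 * B" for x .
  qed
qed

lemma scalar_resolvent:
  fixes h :: "real \<Rightarrow> complex"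
  assumes a: "0 < a" and lam: "0 < Re lam"
    and h: "uniformly_continuous_on UNIV h" and B: "\<And>x. norm (h x) \<le> B"
  obtains u u1 where "\<And>x. (u has_vector_derivative u1 x) (at x)"
    and "\<And>x. (u1 has_vector_derivative (lam * u x + h x) / of_real a) (at x)"
    and "uniformly_continuous_on UNIV u" and "uniformly_continuous_on UNIV u1"
    and "uniformly_continuous_on UNIV (\<lambda>x. (lam * u x + h x) / of_real a)"
    and "\<And>x. norm (u x) \<le> B / Re lam" and "\<And>x. norm (u1 x) \<le> 3 * B / sqrt (a * Re lam)"
    and "\<And>x. norm ((lam * u x + h x) / of_real a) \<le> 3 * B / a"
proof -
  define mu where "mu = lam / of_real a"
  have Re_mu: "Re mu = Re lam / a" by (simp add: mu_def)
  have mu_pos: "0 < Re mu" using a lam by (simp add: Re_mu)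
  have h_cont: "continuous_on UNIV (\<lambda>x. h x / of_real a)"
    using uniformly_continuous_imp_continuous[OF h] a by (auto intro!: continuous_intros)
  have h_bound: "norm (h x / of_real a) \<le> B / a" for x
    using B[of x] a by (simp add: norm_divide divide_right_mono)
  obtain u u1 where u: "\<And>x. (u has_vector_derivative u1 x) (at x)"
    and u1: "\<And>x. (u1 has_vector_derivative (mu * u x + h x / of_real a)) (at x)"
    and bounds: "\<And>x. norm (u x) \<le> B / a / Re mu" "\<And>x. norm (u1 x) \<le> 3 * (B / a) / sqrt (Re mu)"
      "\<And>x. norm (mu * u x + h x / of_real a) \<le> 3 * (B / a)"
    using second_order_ode_bounded_solution[OF mu_pos h_cont h_bound] by blast
  have u2_eq: "mu * u x + h x / of_real a = (lam * u x + h x) / of_real a" for x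
    by (simp add: mu_def add_divide_distrib)
  have u_bound: "norm (u x) \<le> B / Re lam" for x
    using bounds(1)[of x] a by (simp add: Re_mu)
  have "sqrt a * sqrt a = a" using a by simp
  then have u1_scale: "3 * (B / a) / sqrt (Re mu) = 3 * B / sqrt (a * Re lam)"
    using a lam by (simp add: Re_mu real_sqrt_divide real_sqrt_mult field_simps)
  then have u1_bound: "norm (u1 x) \<le> 3 * B / sqrt (a * Re lam)" for x
    using bounds(2)[of x] by (simp only: u1_scale)
  have u2_bound: "norm ((lam * u x + h x) / of_real a) \<le> 3 * B / a" for x
    using bounds(3)[of x] by (simp add: u2_eq)
  show ?thesis
  proof
    show "(u has_vector_derivative u1 x) (at x)" for x by (rule u)
    show "(u1 has_vector_derivative (lam * u x + h x) / of_real a) (at x)" for x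
      using u1[of x] by (simp add: u2_eq)
    show "uniformly_continuous_on UNIV u"
      using u u1_bound by (rule uniformly_continuous_on_bounded_derivative)
    show "uniformly_continuous_on UNIV u1"
      using u1 bounds(3) by (rule uniformly_continuous_on_bounded_derivative)
    show "uniformly_continuous_on UNIV (\<lambda>x. (lam * u x + h x) / of_real a)"
      by (intro bounded_linear.uniformly_continuous_on[OF bounded_linear_divide]
          uniformly_continuous_on_add uniformly_continuous_on_cmul_left h
          \<open>uniformly_continuous_on UNIV u\<close>)
  qed (fact u_bound u1_bound u2_bound)+
qed

section \<open>Bounded uniformly continuous functions and the sup norm\<close>

lemma bounded_range_norm_le:
  "bounded (range f) \<longleftrightarrow> (\<exists>B. \<forall>x. norm (f x) \<le> B)"
  by (auto simp: bounded_iff)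

lemma norm_Pair_le_add: "norm a \<le> A \<Longrightarrow> norm b \<le> B \<Longrightarrow> norm (a, b) \<le> A + B"
  by (rule order_trans[OF norm_Pair_le add_mono])

lemma buc_PairI:
  assumes "uniformly_continuous_on UNIV f" and "uniformly_continuous_on UNIV g"
    and "\<And>x. norm (f x) \<le> Bf" and "\<And>x. norm (g x) \<le> Bg"
  shows "buc (\<lambda>x. (f x, g x))"
  unfolding buc_def bounded_range_norm_le
  using uniformly_continuous_on_Pair[OF assms(1,2)] norm_Pair_le_add[OF assms(3,4)] by blast

lemma buc_uniformly_continuous_fst_snd:
  assumes "buc f"
  shows "uniformly_continuous_on UNIV (\<lambda>x. fst (f x))" and "uniformly_continuous_on UNIV (\<lambda>x. snd (f x))"
  using assms unfolding buc_def
  by (auto intro: bounded_linear.uniformly_continuous_on[OF bounded_linear_fst]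
      bounded_linear.uniformly_continuous_on[OF bounded_linear_snd])

lemma buc2_PairI:
  assumes "\<And>x. (v1 has_vector_derivative v1' x) (at x)" and "\<And>x. (v1' has_vector_derivative v1'' x) (at x)"
    and "\<And>x. (v2 has_vector_derivative v2' x) (at x)" and "\<And>x. (v2' has_vector_derivative v2'' x) (at x)"
    and "buc (\<lambda>x. (v1 x, v2 x))" and "buc (\<lambda>x. (v1' x, v2' x))" and "buc (\<lambda>x. (v1'' x, v2'' x))"
  shows "buc2 (\<lambda>x. (v1 x, v2 x))"
  unfolding buc2_def
  by (intro exI[of _ "\<lambda>x. (v1' x, v2' x)"] exI[of _ "\<lambda>x. (v1'' x, v2'' x)"] conjI allI
      has_vector_derivative_Pair assms)

lemma supn_upper: "bounded (range f) \<Longrightarrow> norm (f x) \<le> supn f"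
  unfolding supn_def bounded_range_norm_le by (auto intro!: cSUP_upper bdd_aboveI2)

lemma supn_nonneg: "bounded (range f) \<Longrightarrow> 0 \<le> supn f"
  using supn_upper norm_ge_zero order_trans by metis

lemma supn_least: "(\<And>x. norm (f x) \<le> c) \<Longrightarrow> supn f \<le> c"
  unfolding supn_def by (rule cSUP_least) auto

section \<open>The resolvent of L0\<close>

lemma vector_derivative_at_fun:
  assumes "\<And>x. (u has_vector_derivative u' x) (at x)"
  shows "(\<lambda>x. vector_derivative u (at x)) = u'"
  using assms by (auto intro: vector_derivative_at)

lemma L0_eq:
  assumes "\<And>x. (u has_vector_derivative u1 x) (at x)" and "\<And>x. (u1 has_vector_derivative u2 x) (at x)"
  shows "L0 eps chi phi U V u x = mat_app eps (D12 chi phi U V x) 0 (1 / eps) (u2 x)"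
  by (simp add: L0_def D11_def D22_def vector_derivative_at_fun[OF assms(1)] vector_derivative_at[OF assms(2)])

lemma L1_eq:
  assumes "\<And>x. (u has_vector_derivative u1 x) (at x)"
  shows "L1 eps chi phi g s U V u x = mat_app (M11 chi phi s V x) (M12 chi phi U V x) 0 s (u1 x)
    + mat_app (N11 chi phi V x) 0 (1 / eps) (N22 eps g V x) (u x)"
  by (simp add: L1_def vector_derivative_at[OF assms])

lemma norm_mat_app_le:
  "norm (mat_app a b c d w) \<le> (\<bar>a\<bar> + \<bar>b\<bar> + \<bar>c\<bar> + \<bar>d\<bar>) * norm w"
proof -
  obtain w1 w2 where w: "w = (w1, w2)" by fastforce
  have "norm (mat_app a b c d w) \<le> (\<bar>a\<bar> * norm w1 + \<bar>b\<bar> * norm w2) + (\<bar>c\<bar> * norm w1 + \<bar>d\<bar> * norm w2)"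
    unfolding mat_app_def w
    by (rule order_trans[OF norm_Pair_le add_mono])
      (auto intro!: order_trans[OF norm_triangle_ineq] simp: norm_mult)
  also have "\<dots> \<le> (\<bar>a\<bar> * norm w + \<bar>b\<bar> * norm w) + (\<bar>c\<bar> * norm w + \<bar>d\<bar> * norm w)"
    unfolding w by (intro add_mono mult_left_mono norm_fst_le norm_snd_le abs_ge_zero)
  also have "\<dots> = (\<bar>a\<bar> + \<bar>b\<bar> + \<bar>c\<bar> + \<bar>d\<bar>) * norm w"
    by (simp add: algebra_simps)
  finally show ?thesis .
qed

lemma mat_app_diff: "mat_app a b c d (w - w') = mat_app a b c d w - mat_app a b c d w'"
  by (simp add: mat_app_def algebra_simps)

lemma cscale_diff: "cscale lam (w - w') = cscale lam w - cscale lam w'"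
  by (simp add: cscale_def algebra_simps)

lemma norm_fst_le_norm: "norm (fst p) \<le> norm p"
  by (metis norm_fst_le prod.collapse)

lemma norm_snd_le_norm: "norm (snd p) \<le> norm p"
  by (metis norm_snd_le prod.collapse)

lemma has_vector_derivative_fst:
  "(u has_vector_derivative D) (at x) \<Longrightarrow> ((\<lambda>x. fst (u x)) has_vector_derivative fst D) (at x)"
  by (rule bounded_linear.has_vector_derivative[OF bounded_linear_fst])

lemma has_vector_derivative_snd:
  "(u has_vector_derivative D) (at x) \<Longrightarrow> ((\<lambda>x. snd (u x)) has_vector_derivative snd D) (at x)"
  by (rule bounded_linear.has_vector_derivative[OF bounded_linear_snd])

lemma L0_homogeneous_bounded_solution:
  fixes z :: "real \<Rightarrow> complex \<times> complex"
  assumes eps: "0 < eps" and lam: "0 < Re lam"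
    and z: "\<And>x. (z has_vector_derivative z1 x) (at x)" and z1: "\<And>x. (z1 has_vector_derivative z2 x) (at x)"
    and B: "\<And>x. norm (z x) \<le> B" and B1: "\<And>x. norm (z1 x) \<le> B1"
    and eq: "\<And>x. mat_app eps (Dd x) 0 (1 / eps) (z2 x) = cscale lam (z x)"
  shows "z x = 0"
proof -
  have eps_ne: "(of_real eps :: complex) \<noteq> 0" using eps by simp
  have "of_real (1 / eps) * snd (z2 x) = lam * snd (z x)" for x
    using arg_cong[OF eq[of x], of snd] by (simp add: mat_app_def cscale_def)
  then have snd_z2: "snd (z2 x) = of_real eps * lam * snd (z x)" for x
    using eps_ne by (simp add: field_simps)
  have snd_z: "snd (z x) = 0" for x
  proof (rule second_order_ode_bounded_solution_unique)
    show "0 < Re (of_real eps * lam)" using eps lam by simp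
    show "((\<lambda>x. snd (z x)) has_vector_derivative snd (z1 x)) (at x)" for x
      by (rule has_vector_derivative_snd[OF z])
    show "((\<lambda>x. snd (z1 x)) has_vector_derivative of_real eps * lam * snd (z x)) (at x)" for x
      using has_vector_derivative_snd[OF z1[of x]] by (simp add: snd_z2)
    show "norm (snd (z x)) \<le> B" for x
      using B[of x] norm_snd_le_norm[of "z x"] by linarith
    show "norm (snd (z1 x)) \<le> B1" for x
      using B1[of x] norm_snd_le_norm[of "z1 x"] by linarith
  qed
  have "of_real eps * fst (z2 x) = lam * fst (z x)" for x
    using arg_cong[OF eq[of x], of fst] snd_z2[of x] snd_z[of x] by (simp add: mat_app_def cscale_def)
  then have fst_z2: "fst (z2 x) = lam / of_real eps * fst (z x)" for x
    using eps_ne by (simp add: field_simps)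
  have fst_z: "fst (z x) = 0" for x
  proof (rule second_order_ode_bounded_solution_unique)
    show "0 < Re (lam / of_real eps)" using eps lam by simp
    show "((\<lambda>x. fst (z x)) has_vector_derivative fst (z1 x)) (at x)" for x
      by (rule has_vector_derivative_fst[OF z])
    show "((\<lambda>x. fst (z1 x)) has_vector_derivative lam / of_real eps * fst (z x)) (at x)" for x
      using has_vector_derivative_fst[OF z1[of x]] by (simp add: fst_z2)
    show "norm (fst (z x)) \<le> B" for x
      using B[of x] norm_fst_le_norm[of "z x"] by linarith
    show "norm (fst (z1 x)) \<le> B1" for x
      using B1[of x] norm_fst_le_norm[of "z1 x"] by linarith
  qed
  show ?thesis using fst_z snd_z by (simp add: prod_eq_iff)
qed

lemma L0_resolvent_unique:
  assumes eps: "0 < eps" and lam: "0 < Re lam"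
    and u: "buc2 u" "\<And>x. L0 eps chi phi U V u x - cscale lam (u x) = f x"
    and v: "buc2 v" "\<And>x. L0 eps chi phi U V v x - cscale lam (v x) = f x"
  shows "u = v"
proof -
  obtain u1 u2 where u': "\<And>x. (u has_vector_derivative u1 x) (at x)" "\<And>x. (u1 has_vector_derivative u2 x) (at x)"
    and "buc u" "buc u1"
    using u(1) unfolding buc2_def by blast
  obtain v1 v2 where v': "\<And>x. (v has_vector_derivative v1 x) (at x)" "\<And>x. (v1 has_vector_derivative v2 x) (at x)"
    and "buc v" "buc v1"
    using v(1) unfolding buc2_def by blast
  obtain Bu Bu1 Bv Bv1 where "\<And>x. norm (u x) \<le> Bu" "\<And>x. norm (u1 x) \<le> Bu1"
    "\<And>x. norm (v x) \<le> Bv" "\<And>x. norm (v1 x) \<le> Bv1"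
    using \<open>buc u\<close> \<open>buc u1\<close> \<open>buc v\<close> \<open>buc v1\<close> unfolding buc_def bounded_range_norm_le by metis
  then have bounds: "norm (u x - v x) \<le> Bu + Bv" "norm (u1 x - v1 x) \<le> Bu1 + Bv1" for x
    by (meson add_mono norm_triangle_ineq4 order_trans)+
  have "u x - v x = 0" for x
  proof (rule L0_homogeneous_bounded_solution[OF eps lam _ _ bounds])
    show "((\<lambda>x. u x - v x) has_vector_derivative u1 x - v1 x) (at x)" for x
      by (intro has_vector_derivative_diff u' v')
    show "((\<lambda>x. u1 x - v1 x) has_vector_derivative u2 x - v2 x) (at x)" for x
      by (intro has_vector_derivative_diff u' v')
    show "mat_app eps (D12 chi phi U V x) 0 (1 / eps) (u2 x - v2 x) = cscale lam (u x - v x)" for x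
      using u(2)[of x] v(2)[of x] unfolding mat_app_diff cscale_diff L0_eq[OF u'] L0_eq[OF v']
      by (simp add: algebra_simps)
  qed
  then show ?thesis by auto
qed

lemma L0_resolvent_exists:
  assumes eps: "0 < eps" and lam: "0 < Re lam"
    and D_uc: "uniformly_continuous_on UNIV (D12 chi phi U V)" and KD: "\<And>x. \<bar>D12 chi phi U V x\<bar> \<le> KD"
    and f: "buc f" and B: "\<And>x. norm (f x) \<le> B"
  obtains u u1 where "buc2 u" and "\<And>x. (u has_vector_derivative u1 x) (at x)"
    and "\<And>x. L0 eps chi phi U V u x - cscale lam (u x) = f x"
    and "\<And>x. norm (u x) \<le> (2 + 3 * eps * KD) * B / Re lam"
    and "\<And>x. norm (u1 x) \<le> 3 * (sqrt eps + (1 + 3 * eps * KD) / sqrt eps) * B / sqrt (Re lam)"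
proof -
  define D where "D = D12 chi phi U V"
  define A where "A = 1 + 3 * eps * KD"
  note f_uc = buc_uniformly_continuous_fst_snd[OF f]
  have f_bound: "norm (fst (f x)) \<le> B" "norm (snd (f x)) \<le> B" for x
    using B[of x] norm_fst_le_norm[of "f x"] norm_snd_le_norm[of "f x"] by linarith+
  obtain v2 v2' where v2: "\<And>x. (v2 has_vector_derivative v2' x) (at x)"
    and v2': "\<And>x. (v2' has_vector_derivative (lam * v2 x + snd (f x)) / of_real (1 / eps)) (at x)"
    and v2_uc: "uniformly_continuous_on UNIV v2" "uniformly_continuous_on UNIV v2'"
      "uniformly_continuous_on UNIV (\<lambda>x. (lam * v2 x + snd (f x)) / of_real (1 / eps))"
    and v2_bound: "\<And>x. norm (v2 x) \<le> B / Re lam" "\<And>x. norm (v2' x) \<le> 3 * B / sqrt (1 / eps * Re lam)"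
      "\<And>x. norm ((lam * v2 x + snd (f x)) / of_real (1 / eps)) \<le> 3 * B / (1 / eps)"
    by (rule scalar_resolvent[of "1 / eps" lam "\<lambda>x. snd (f x)" B]) (use eps lam f_uc f_bound in auto)
  define w2 where "w2 = (\<lambda>x. (lam * v2 x + snd (f x)) / of_real (1 / eps))"
  define h1 where "h1 = (\<lambda>x. fst (f x) - of_real (D x) * w2 x)"
  have h1_uc: "uniformly_continuous_on UNIV h1"
    unfolding h1_def w2_def D_def
    by (rule uniformly_continuous_on_diff_of_real_mult[OF f_uc(1) D_uc KD v2_uc(3) v2_bound(3)])
  have h1_bound: "norm (h1 x) \<le> A * B" for x
  proof -
    have "norm (h1 x) \<le> norm (fst (f x)) + \<bar>D x\<bar> * norm (w2 x)"
      unfolding h1_def by (metis norm_triangle_ineq4 norm_mult norm_of_real)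
    also have "\<dots> \<le> B + KD * (3 * B / (1 / eps))"
      using f_bound(1) KD[of x] v2_bound(3)[of x] B[of 0] eps
      by (intro add_mono mult_mono) (auto simp: D_def w2_def intro: order_trans[OF norm_ge_zero])
    also have "\<dots> = A * B" by (simp add: A_def algebra_simps)
    finally show ?thesis .
  qed
  obtain v1 v1' where v1: "\<And>x. (v1 has_vector_derivative v1' x) (at x)"
    and v1': "\<And>x. (v1' has_vector_derivative (lam * v1 x + h1 x) / of_real eps) (at x)"
    and v1_uc: "uniformly_continuous_on UNIV v1" "uniformly_continuous_on UNIV v1'"
      "uniformly_continuous_on UNIV (\<lambda>x. (lam * v1 x + h1 x) / of_real eps)"
    and v1_bound: "\<And>x. norm (v1 x) \<le> A * B / Re lam" "\<And>x. norm (v1' x) \<le> 3 * (A * B) / sqrt (eps * Re lam)"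
      "\<And>x. norm ((lam * v1 x + h1 x) / of_real eps) \<le> 3 * (A * B) / eps"
    using scalar_resolvent[OF eps lam h1_uc h1_bound] by blast
  have u: "((\<lambda>x. (v1 x, v2 x)) has_vector_derivative (v1' x, v2' x)) (at x)" for x
    by (intro has_vector_derivative_Pair v1 v2)
  show ?thesis
  proof (rule that[OF buc2_PairI[OF v1 v1' v2 v2'] u])
    show "buc (\<lambda>x. (v1 x, v2 x))"
      by (rule buc_PairI[OF v1_uc(1) v2_uc(1) v1_bound(1) v2_bound(1)])
    show "buc (\<lambda>x. (v1' x, v2' x))"
      by (rule buc_PairI[OF v1_uc(2) v2_uc(2) v1_bound(2) v2_bound(2)])
    show "buc (\<lambda>x. ((lam * v1 x + h1 x) / of_real eps, (lam * v2 x + snd (f x)) / of_real (1 / eps)))"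
      by (rule buc_PairI[OF v1_uc(3) v2_uc(3) v1_bound(3) v2_bound(3)])
    show "L0 eps chi phi U V (\<lambda>x. (v1 x, v2 x)) x - cscale lam (v1 x, v2 x) = f x" for x
      using eps unfolding L0_eq[OF u has_vector_derivative_Pair[OF v1' v2']]
      by (simp add: mat_app_def cscale_def w2_def h1_def D_def prod_eq_iff field_simps)
    show "norm (v1 x, v2 x) \<le> (2 + 3 * eps * KD) * B / Re lam" for x
      using norm_Pair_le_add[OF v1_bound(1) v2_bound(1)] by (simp add: A_def add_divide_distrib algebra_simps)
    have "3 * (A * B) / sqrt (eps * Re lam) + 3 * B / sqrt (1 / eps * Re lam)
        = 3 * (sqrt eps + A / sqrt eps) * B / sqrt (Re lam)"
      using eps lam by (simp add: real_sqrt_mult real_sqrt_divide field_simps)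
    then show "norm (v1' x, v2' x) \<le> 3 * (sqrt eps + (1 + 3 * eps * KD) / sqrt eps) * B / sqrt (Re lam)" for x
      using norm_Pair_le_add[OF v1_bound(2) v2_bound(2)] by (simp add: A_def)
  qed
qed

lemma L0_resolvent_ex1:
  assumes eps: "0 < eps" and lam: "0 < Re lam"
    and D_uc: "uniformly_continuous_on UNIV (D12 chi phi U V)" and KD: "\<And>x. \<bar>D12 chi phi U V x\<bar> \<le> KD"
    and f: "buc f"
  shows "\<exists>!u. buc2 u \<and> (\<forall>x. L0 eps chi phi U V u x - cscale lam (u x) = f x)"
proof (rule ex_ex1I)
  have "norm (f x) \<le> supn f" for x
    using f by (simp add: buc_def supn_upper)
  then show "\<exists>u. buc2 u \<and> (\<forall>x. L0 eps chi phi U V u x - cscale lam (u x) = f x)"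
    using L0_resolvent_exists[OF eps lam D_uc KD f] by metis
qed (use L0_resolvent_unique[OF eps lam] in blast)

lemma L0_resolvent_estimate:
  assumes eps: "0 < eps"
    and D_uc: "uniformly_continuous_on UNIV (D12 chi phi U V)" and KD: "\<And>x. \<bar>D12 chi phi U V x\<bar> \<le> KD"
  obtains C where "\<And>lam f u. 1 \<le> Re lam \<Longrightarrow> buc f \<Longrightarrow> buc2 u \<Longrightarrow>
      (\<forall>x. L0 eps chi phi U V u x - cscale lam (u x) = f x) \<Longrightarrow>
      \<exists>u1. (\<forall>x. (u has_vector_derivative u1 x) (at x))
        \<and> (\<forall>x. norm (u x) + norm (u1 x) \<le> C * supn f / sqrt (Re lam))"
proof
  define C0 where "C0 = 2 + 3 * eps * KD"
  define C1 where "C1 = 3 * (sqrt eps + (1 + 3 * eps * KD) / sqrt eps)"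
  fix lam f u assume lam: "1 \<le> Re lam" and f: "buc f"
    and u: "buc2 u" "\<forall>x. L0 eps chi phi U V u x - cscale lam (u x) = f x"
  have f_bound: "norm (f x) \<le> supn f" for x
    using f by (simp add: buc_def supn_upper)
  have "0 < Re lam" using lam by simp
  from L0_resolvent_exists[OF eps this D_uc KD f f_bound]
  obtain w w1 where w: "buc2 w" "\<And>x. (w has_vector_derivative w1 x) (at x)"
    "\<And>x. L0 eps chi phi U V w x - cscale lam (w x) = f x"
    and bounds: "\<And>x. norm (w x) \<le> C0 * supn f / Re lam" "\<And>x. norm (w1 x) \<le> C1 * supn f / sqrt (Re lam)"
    unfolding C0_def C1_def by blast
  have "u = w"
    using L0_resolvent_unique[OF eps \<open>0 < Re lam\<close> u(1) _ w(1)] u(2) w(3) by blast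
  have "0 \<le> KD" using KD[of 0] by linarith
  moreover have "0 \<le> supn f" using f by (simp add: buc_def supn_nonneg)
  ultimately have "0 \<le> C0 * supn f" using eps by (simp add: C0_def)
  moreover have "sqrt (Re lam) \<le> Re lam"
    using lam mult_right_mono[OF lam, of "Re lam"] by (intro real_le_lsqrt) (auto simp: power2_eq_square)
  ultimately have "C0 * supn f / Re lam \<le> C0 * supn f / sqrt (Re lam)"
    using lam by (intro divide_left_mono) auto
  then have "norm (w x) + norm (w1 x) \<le> C0 * supn f / sqrt (Re lam) + C1 * supn f / sqrt (Re lam)" for x
    using bounds[of x] by linarith
  then have "norm (w x) + norm (w1 x) \<le> (C0 + C1) * supn f / sqrt (Re lam)" for x
    by (simp add: add_divide_distrib distrib_right)
  with w(2) show "\<exists>u1. (\<forall>x. (u has_vector_derivative u1 x) (at x))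
      \<and> (\<forall>x. norm (u x) + norm (u1 x) \<le> (C0 + C1) * supn f / sqrt (Re lam))"
    unfolding \<open>u = w\<close> by blast
qed

section \<open>The coefficients and the perturbation L1\<close>

lemma bdd_cont_abs_le: "bdd_cont h \<Longrightarrow> \<exists>K. \<forall>x. \<bar>h x\<bar> \<le> K"
  unfolding bdd_cont_def bounded_range_norm_le by simp

lemma L1_bound:
  assumes "bdd_cont (M11 chi phi s V)" "bdd_cont (M12 chi phi U V)"
    and "bdd_cont (N11 chi phi V)" "bdd_cont (N22 eps g V)"
  obtains K where "0 \<le> K" and "\<And>u u1 x. (\<And>y. (u has_vector_derivative u1 y) (at y)) \<Longrightarrow>
      norm (L1 eps chi phi g s U V u x) \<le> K * (norm (u x) + norm (u1 x))"
proof -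
  obtain K1 K2 K3 K4 where K: "\<And>x. \<bar>M11 chi phi s V x\<bar> \<le> K1" "\<And>x. \<bar>M12 chi phi U V x\<bar> \<le> K2"
    "\<And>x. \<bar>N11 chi phi V x\<bar> \<le> K3" "\<And>x. \<bar>N22 eps g V x\<bar> \<le> K4"
    using assms[THEN bdd_cont_abs_le] by metis
  define K where "K = K1 + K2 + K3 + K4 + \<bar>s\<bar> + \<bar>1 / eps\<bar>"
  have K_nonneg: "0 \<le> K1" "0 \<le> K2" "0 \<le> K3" "0 \<le> K4"
    using K[of 0] by (meson abs_ge_zero order_trans)+
  show ?thesis
  proof
    show "0 \<le> K" using K_nonneg by (simp add: K_def)
    fix u :: "real \<Rightarrow> complex \<times> complex" and u1 x
    assume u: "\<And>y. (u has_vector_derivative u1 y) (at y)"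
    have "norm (L1 eps chi phi g s U V u x)
        \<le> (\<bar>M11 chi phi s V x\<bar> + \<bar>M12 chi phi U V x\<bar> + \<bar>0\<bar> + \<bar>s\<bar>) * norm (u1 x)
          + (\<bar>N11 chi phi V x\<bar> + \<bar>0\<bar> + \<bar>1 / eps\<bar> + \<bar>N22 eps g V x\<bar>) * norm (u x)"
      unfolding L1_eq[OF u] by (rule order_trans[OF norm_triangle_ineq add_mono[OF norm_mat_app_le norm_mat_app_le]])
    also have "\<dots> \<le> K * norm (u1 x) + K * norm (u x)"
    proof (intro add_mono mult_right_mono norm_ge_zero)
      show "\<bar>M11 chi phi s V x\<bar> + \<bar>M12 chi phi U V x\<bar> + \<bar>0\<bar> + \<bar>s\<bar> \<le> K"
        using K[of x] K_nonneg abs_ge_zero[of "1 / eps"] unfolding K_def by linarith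
      show "\<bar>N11 chi phi V x\<bar> + \<bar>0\<bar> + \<bar>1 / eps\<bar> + \<bar>N22 eps g V x\<bar> \<le> K"
        using K[of x] K_nonneg abs_ge_zero[of s] unfolding K_def by linarith
    qed
    finally show "norm (L1 eps chi phi g s U V u x) \<le> K * (norm (u x) + norm (u1 x))"
      by (simp add: algebra_simps)
  qed
qed

lemma L1_resolvent_estimate:
  assumes eps: "0 < eps"
    and D_uc: "uniformly_continuous_on UNIV (D12 chi phi U V)" and KD: "\<And>x. \<bar>D12 chi phi U V x\<bar> \<le> KD"
    and "bdd_cont (M11 chi phi s V)" "bdd_cont (M12 chi phi U V)"
    and "bdd_cont (N11 chi phi V)" "bdd_cont (N22 eps g V)"
  obtains C where "\<And>lam f u. 1 \<le> Re lam \<Longrightarrow> buc f \<Longrightarrow> buc2 u \<Longrightarrow>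
      (\<forall>x. L0 eps chi phi U V u x - cscale lam (u x) = f x) \<Longrightarrow>
      supn (L1 eps chi phi g s U V u) \<le> C * supn f / sqrt (Re lam)"
proof -
  obtain C where C: "\<And>lam f u. 1 \<le> Re lam \<Longrightarrow> buc f \<Longrightarrow> buc2 u \<Longrightarrow>
      (\<forall>x. L0 eps chi phi U V u x - cscale lam (u x) = f x) \<Longrightarrow>
      \<exists>u1. (\<forall>x. (u has_vector_derivative u1 x) (at x))
        \<and> (\<forall>x. norm (u x) + norm (u1 x) \<le> C * supn f / sqrt (Re lam))"
    using L0_resolvent_estimate[OF eps D_uc KD] by blast
  obtain K where K: "0 \<le> K" "\<And>u u1 x. (\<And>y. (u has_vector_derivative u1 y) (at y)) \<Longrightarrow>
      norm (L1 eps chi phi g s U V u x) \<le> K * (norm (u x) + norm (u1 x))"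
    using L1_bound[OF assms(4-7)] by blast
  show ?thesis
  proof (rule that[of "K * C"], rule supn_least)
    fix lam f u x assume "1 \<le> Re lam" "buc f" "buc2 u" "\<forall>x. L0 eps chi phi U V u x - cscale lam (u x) = f x"
    then obtain u1 where u1: "\<And>x. (u has_vector_derivative u1 x) (at x)"
      and bound: "\<And>x. norm (u x) + norm (u1 x) \<le> C * supn f / sqrt (Re lam)"
      using C by blast
    show "norm (L1 eps chi phi g s U V u x) \<le> K * C * supn f / sqrt (Re lam)"
      using K(2)[OF u1, of x] mult_left_mono[OF bound[of x] K(1)] by simp
  qed
qed

lemma D12_has_real_derivative:
  assumes "(\<lambda>y. U y * deriv phi (deriv V y)) differentiable at x"
  shows "(D12 chi phi U V has_real_derivative M12 chi phi U V x) (at x)"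
proof -
  have "((\<lambda>y. U y * deriv phi (deriv V y)) has_real_derivative deriv (\<lambda>y. U y * deriv phi (deriv V y)) x) (at x)"
    using assms by (simp add: DERIV_deriv_iff_real_differentiable)
  from DERIV_cmult[OF this, of "- chi"] show ?thesis
    unfolding M12_def by (simp add: D12_def[abs_def] mult.assoc)
qed

lemma D12_uniformly_continuous:
  assumes "\<forall>x. (\<lambda>y. U y * deriv phi (deriv V y)) differentiable at x" and "bdd_cont (M12 chi phi U V)"
  shows "uniformly_continuous_on UNIV (D12 chi phi U V)"
proof -
  obtain KM where "\<And>x. \<bar>M12 chi phi U V x\<bar> \<le> KM"
    using bdd_cont_abs_le[OF assms(2)] by blast
  then show ?thesis
    using D12_has_real_derivative[OF assms(1)[rule_format]]
    by (intro uniformly_continuous_on_bounded_derivative)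
      (auto simp: has_real_derivative_iff_has_vector_derivative)
qed

theorem propositionA3:
  fixes eps chi s :: real and phi g U V :: "real \<Rightarrow> real"
  assumes "eps > 0" and "chi > 0"
    and "\<forall>x. phi differentiable at x" and "\<forall>x. g differentiable at x"
    and "traveling_pulse eps chi phi g s U V"
    and "\<forall>x. (\<lambda>y. U y * deriv phi (deriv V y)) differentiable at x"
    and "\<forall>x. (\<lambda>y. phi (deriv V y)) differentiable at x"
    and "bdd_cont (\<lambda>x. D12 chi phi U V x)"
    and "bdd_cont (\<lambda>x. M11 chi phi s V x)" and "bdd_cont (\<lambda>x. M12 chi phi U V x)"
    and "bdd_cont (\<lambda>x. N11 chi phi V x)" and "bdd_cont (\<lambda>x. N22 eps g V x)"
  shows "\<exists>R. \<forall>lam::complex. Re lam > R \<longrightarrow>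
     (\<forall>f. buc f \<longrightarrow> (\<exists>!u. buc2 u \<and> (\<forall>x. L0 eps chi phi U V u x - cscale lam (u x) = f x)))
   \<and> (\<exists>c<1. \<forall>f u. buc f \<longrightarrow> buc2 u \<longrightarrow>
          (\<forall>x. L0 eps chi phi U V u x - cscale lam (u x) = f x) \<longrightarrow>
          supn (L1 eps chi phi g s U V u) \<le> c * supn f)"
proof -
  obtain KD where KD: "\<And>x. \<bar>D12 chi phi U V x\<bar> \<le> KD"
    using bdd_cont_abs_le[OF assms(8)] by blast
  note D_uc = D12_uniformly_continuous[OF assms(6,10)]
  obtain C where C: "\<And>lam f u. 1 \<le> Re lam \<Longrightarrow> buc f \<Longrightarrow> buc2 u \<Longrightarrow>
      (\<forall>x. L0 eps chi phi U V u x - cscale lam (u x) = f x) \<Longrightarrow>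
      supn (L1 eps chi phi g s U V u) \<le> C * supn f / sqrt (Re lam)"
    using L1_resolvent_estimate[OF assms(1) D_uc KD assms(9-12)] by blast
  show ?thesis
  proof (rule exI[of _ "max 1 ((2 * C)\<^sup>2)"], intro allI impI)
    fix lam :: complex assume "max 1 ((2 * C)\<^sup>2) < Re lam"
    then have lam: "1 \<le> Re lam" "0 < Re lam" "2 * C \<le> sqrt (Re lam)"
      by (auto intro: real_le_rsqrt)
    have "C * supn f / sqrt (Re lam) \<le> 1 / 2 * supn f" if "buc f" for f
      using mult_right_mono[OF lam(3) supn_nonneg[OF that[unfolded buc_def, THEN conjunct1]]] lam(2)
      by (simp add: field_simps)
    then have contraction: "supn (L1 eps chi phi g s U V u) \<le> 1 / 2 * supn f"
      if "buc f" "buc2 u" "\<forall>x. L0 eps chi phi U V u x - cscale lam (u x) = f x" for f u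
      using C[OF lam(1) that] that(1) by (blast intro: order_trans)
    show "(\<forall>f. buc f \<longrightarrow> (\<exists>!u. buc2 u \<and> (\<forall>x. L0 eps chi phi U V u x - cscale lam (u x) = f x)))
      \<and> (\<exists>c<1. \<forall>f u. buc f \<longrightarrow> buc2 u \<longrightarrow>
          (\<forall>x. L0 eps chi phi U V u x - cscale lam (u x) = f x) \<longrightarrow>
          supn (L1 eps chi phi g s U V u) \<le> c * supn f)"
      using L0_resolvent_ex1[OF assms(1) lam(2) D_uc KD] contraction
      by (intro conjI exI[of _ "1 / 2"]) (simp | blast)+
  qed
qed

end
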